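(* Let $(y_t)_{t\in\mathbb{Z}}$ be a strictly stationary sequence of random vectors in $\mathbb{R}^q$ with marginal law $P_0$, and let $P_T:=T^{-1}\sum_{t=1}^T\delta_{y_t}$. Let $k$ be a measurable, symmetric, positive definite, characteristic kernel on $\mathbb{R}^q$ with $\sup_y|k(y,y)|\le 1$, and let $\mathcal{D}$ be the associated Maximum Mean Discrepancy. Let $\{P_\theta;\theta\in\Theta\}$, $\Theta\subset\mathbb{R}^d$, be a family of probability measures on $\mathbb{R}^q$ and $\hat\theta_T\in\arg\min_{\theta\in\Theta}\mathcal{D}(P_\theta,P_T)$. Assume $\Sigma_T=o(T)$ as $T\to\infty$ and the identifiability conditions: (i) the function $\theta\mapsto\mathcal{D}(P_\theta,P_0)$ has a unique minimizer $\theta^*\in\Theta$; and (ii) for every $r>0$, $\inf_{\{\theta\in\Theta:\|\theta-\theta^*\|\ge r\}}\mathcal{D}(P_\theta,P_0)>\mathcal{D}(P_{\theta^*},P_0)$. Then $\hat\theta_T\to\theta^*$ in probability as $T\to\infty$.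
   Context: The kernel $k$ has RKHS $\mathcal{H}$ with $k(u,v)=\langle\Phi(u),\Phi(v)\rangle_{\mathcal{H}}$. For probability measures $P_1,P_2$ on $\mathbb{R}^q$, $\mathcal{D}^2(P_1,P_2)=\mathbb{E}_{X,X'\sim P_1}k(X,X')-2\mathbb{E}_{X\sim P_1,Y'\sim P_2}k(X,Y')+\mathbb{E}_{Y,Y'\sim P_2}k(Y,Y')$ (independent draws). For $t>0$, $\varrho_t:=\left|\mathbb{E}\left\langle k(y_t,\cdot)-\mathbb{E}[k(y_t,\cdot)],\,k(y_0,\cdot)-\mathbb{E}[k(y_0,\cdot)]\right\rangle_{\mathcal{H}}\right|$ and $\Sigma_T:=\sum_{s=1}^T\varrho_s$. *)

theory Defs
  imports "HOL-Probability.Probability" "HOL-Library.Landau_Symbols"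
begin

definition symmetric_kernel :: "('q \<Rightarrow> 'q \<Rightarrow> real) \<Rightarrow> bool" where
  "symmetric_kernel k \<longleftrightarrow> (\<forall>x y. k x y = k y x)"

definition pos_def_kernel :: "('q \<Rightarrow> 'q \<Rightarrow> real) \<Rightarrow> bool" where
  "pos_def_kernel k \<longleftrightarrow>
     (\<forall>(n::nat) (c::nat \<Rightarrow> real) (x::nat \<Rightarrow> 'q).
        0 \<le> (\<Sum>i<n. \<Sum>j<n. c i * c j * k (x i) (x j)))"

definition mean_embedding :: "('q \<Rightarrow> 'q \<Rightarrow> real) \<Rightarrow> 'q measure \<Rightarrow> 'q \<Rightarrow> real" where
  "mean_embedding k P = (\<lambda>x. \<integral>y. k x y \<partial>P)"

definition characteristic_kernel :: "('q::topological_space \<Rightarrow> 'q \<Rightarrow> real) \<Rightarrow> bool" where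
  "characteristic_kernel k \<longleftrightarrow>
     (\<forall>P Q. prob_space P \<longrightarrow> prob_space Q \<longrightarrow> sets P = sets borel \<longrightarrow> sets Q = sets borel
        \<longrightarrow> mean_embedding k P = mean_embedding k Q \<longrightarrow> P = Q)"

definition mmd2 :: "('q \<Rightarrow> 'q \<Rightarrow> real) \<Rightarrow> 'q measure \<Rightarrow> 'q measure \<Rightarrow> real" where
  "mmd2 k P1 P2 =
     (\<integral>z. k (fst z) (snd z) \<partial>(P1 \<Otimes>\<^sub>M P1))
     - 2 * (\<integral>z. k (fst z) (snd z) \<partial>(P1 \<Otimes>\<^sub>M P2))
     + (\<integral>z. k (fst z) (snd z) \<partial>(P2 \<Otimes>\<^sub>M P2))"

definition mmd :: "('q \<Rightarrow> 'q \<Rightarrow> real) \<Rightarrow> 'q measure \<Rightarrow> 'q measure \<Rightarrow> real" where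
  "mmd k P1 P2 = sqrt (mmd2 k P1 P2)"

definition strictly_stationary ::
  "'a measure \<Rightarrow> (int \<Rightarrow> 'a \<Rightarrow> 'q::topological_space) \<Rightarrow> bool" where
  "strictly_stationary M y \<longleftrightarrow>
     (\<forall>J h. finite J \<longrightarrow>
        distr M (PiM J (\<lambda>_. borel)) (\<lambda>\<omega>. \<lambda>t\<in>J. y (t + h) \<omega>)
        = distr M (PiM J (\<lambda>_. borel)) (\<lambda>\<omega>. \<lambda>t\<in>J. y t \<omega>))"

definition empirical_measure ::
  "(int \<Rightarrow> 'a \<Rightarrow> 'q::topological_space) \<Rightarrow> nat \<Rightarrow> 'a \<Rightarrow> 'q measure" where
  "empirical_measure y T \<omega> =
     distr (uniform_measure (count_space UNIV) {1..int T}) borel (\<lambda>t. y t \<omega>)"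

text \<open>rho_t: absolute value of the RKHS covariance
  E<k(y_t,.) - E k(y_t,.), k(y_0,.) - E k(y_0,.)>, written out with the reproducing
  property: it equals |E k(y_t,y_0) - E_{Y,Y' iid P0} k(Y,Y')| where P0 is the
  marginal law (the law of y_0).\<close>
definition rho :: "'a measure \<Rightarrow> ('q::topological_space \<Rightarrow> 'q \<Rightarrow> real)
    \<Rightarrow> (int \<Rightarrow> 'a \<Rightarrow> 'q) \<Rightarrow> int \<Rightarrow> real" where
  "rho M k y t =
     \<bar>(\<integral>\<omega>. k (y t \<omega>) (y 0 \<omega>) \<partial>M)
      - (\<integral>z. k (fst z) (snd z) \<partial>(distr M borel (y 0) \<Otimes>\<^sub>M distr M borel (y 0)))\<bar>"

definition Sigma_T :: "'a measure \<Rightarrow> ('q::topological_space \<Rightarrow> 'q \<Rightarrow> real)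
    \<Rightarrow> (int \<Rightarrow> 'a \<Rightarrow> 'q) \<Rightarrow> nat \<Rightarrow> real" where
  "Sigma_T M k y T = (\<Sum>s=1..T. rho M k y (int s))"

end

theory Submission
  imports Defs
begin

text \<open>
  Write \<open>D\<close> for the MMD. If \<open>\<theta>hat T\<close> is at distance at least \<open>\<epsilon>\<close> from \<open>\<theta>star\<close>, condition (ii)
  gives \<open>D(P \<theta>hat, P0) \<ge> D(P \<theta>star, P0) + \<delta>\<close> for some \<open>\<delta> > 0\<close>, while the triangle inequality
  and the minimising property of \<open>\<theta>hat T\<close> give \<open>D(P \<theta>hat, P0) \<le> D(P \<theta>star, P0) + 2 D(P_T, P0)\<close>.
  So the bad event forces \<open>D(P_T, P0) \<ge> \<delta>/2\<close>. Expanding \<open>D\<^sup>2(P_T, P0)\<close> as a double sum, its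
  expectation is \<open>T\<^sup>-\<^sup>2 \<Sum>s,t (E k(y s, y t) - E k(Y, Y'))\<close>, and by stationarity the \<open>(s, t)\<close> term is at
  most \<open>\<rho>|s - t|\<close>. Hence \<open>E D\<^sup>2(P_T, P0) \<le> (2 + 2 \<Sigma>_T) / T \<longrightarrow> 0\<close>, and Chebyshev's inequality
  concludes.

  No RKHS is constructed: the metric properties of \<open>D\<close> come from positive semidefiniteness of the
  Gram form \<open>\<Sum>a b. c a * c b * \<integral>\<integral> k d(P a \<Otimes> P b)\<close>. The expectation of the positive definite form of
  \<open>k\<close> over \<open>n\<close> independent copies of each \<open>P a\<close> is \<open>n\<^sup>2\<close> times this Gram form plus \<open>n\<close> times a
  diagonal correction; letting \<open>n \<rightarrow> \<infinity>\<close> shows that the Gram form is nonnegative.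
\<close>

lemma quadratic_nonneg_imp_leading_nonneg:
  fixes Q E :: real
  assumes "\<And>n::nat. n \<ge> 1 \<Longrightarrow> 0 \<le> real n * real n * Q + real n * E"
  shows "0 \<le> Q"
proof (rule tendsto_lowerbound)
  show "(\<lambda>n. Q + E / real n) \<longlonglongrightarrow> Q"
    using tendsto_add[OF tendsto_const lim_const_over_n[of E]] by simp
  show "\<forall>\<^sub>F n in sequentially. 0 \<le> Q + E / real n"
  proof (rule eventually_sequentiallyI[of 1])
    fix n :: nat assume "1 \<le> n"
    then have "0 \<le> (real n * real n * Q + real n * E) / (real n * real n)"
      using assms by simp
    also have "\<dots> = Q + E / real n"
      using \<open>1 \<le> n\<close> by (simp add: field_simps)
    finally show "0 \<le> Q + E / real n" .
  qed
qed simp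

lemma quadratic_nonneg_imp_le_sqrt_mult:
  fixes x w z :: real
  assumes q: "\<And>t. 0 \<le> t * t * x + 2 * t * w + z" and "0 \<le> x" and "0 \<le> z"
  shows "w \<le> sqrt x * sqrt z"
proof (cases "w \<le> 0")
  case True
  then show ?thesis
    using assms(2,3) by (meson order.trans mult_nonneg_nonneg real_sqrt_ge_zero)
next
  case False
  show ?thesis
  proof (cases "x = 0")
    case True
    have "0 \<le> 2 * (- (z + 1) / (2 * w)) * w + z"
      using q[of "- (z + 1) / (2 * w)"] True by simp
    also have "\<dots> = -1"
      using False by (simp add: field_simps)
    finally show ?thesis by simp
  next
    case False
    with \<open>0 \<le> x\<close> have "0 < x" by simp
    have "0 \<le> (- w / x) * (- w / x) * x + 2 * (- w / x) * w + z" by (rule q)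
    also have "\<dots> = z - w * w / x"
      using \<open>0 < x\<close> by (simp add: field_simps)
    finally have "sqrt (w * w) \<le> sqrt (x * z)"
      using \<open>0 < x\<close> by (intro real_sqrt_le_mono) (simp add: field_simps)
    then show ?thesis
      using \<open>\<not> w \<le> 0\<close> by (simp add: real_sqrt_mult)
  qed
qed

lemma sum_sum_abs_diff_le:
  fixes r :: "int \<Rightarrow> real"
  assumes r: "\<And>h. 0 \<le> r h"
  shows "(\<Sum>s\<in>{1..int T}. \<Sum>t\<in>{1..int T}. r \<bar>s - t\<bar>)
    \<le> real T * (r 0 + 2 * (\<Sum>h\<in>{1..int T}. r h))"
proof -
  have row: "(\<Sum>t\<in>{1..int T}. r \<bar>s - t\<bar>) \<le> r 0 + 2 * (\<Sum>h\<in>{1..int T}. r h)"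
    if s: "s \<in> {1..int T}" for s
  proof -
    have "(\<Sum>t\<in>{1..<s}. r \<bar>s - t\<bar>) = (\<Sum>h\<in>(\<lambda>t. s - t) ` {1..<s}. r h)"
      by (subst sum.reindex) (auto simp: inj_on_def intro!: sum.cong)
    also have "\<dots> \<le> (\<Sum>h\<in>{1..int T}. r h)"
      using s by (intro sum_mono2) (auto simp: r)
    finally have lower: "(\<Sum>t\<in>{1..<s}. r \<bar>s - t\<bar>) \<le> (\<Sum>h\<in>{1..int T}. r h)" .
    have "(\<Sum>t\<in>{s<..int T}. r \<bar>s - t\<bar>) = (\<Sum>h\<in>(\<lambda>t. t - s) ` {s<..int T}. r h)"
      by (subst sum.reindex) (auto simp: inj_on_def intro!: sum.cong)
    also have "\<dots> \<le> (\<Sum>h\<in>{1..int T}. r h)"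
      using s by (intro sum_mono2) (auto simp: r)
    finally have upper: "(\<Sum>t\<in>{s<..int T}. r \<bar>s - t\<bar>) \<le> (\<Sum>h\<in>{1..int T}. r h)" .
    have "{1..int T} = insert s ({1..<s} \<union> {s<..int T})"
      using s by auto
    then have "(\<Sum>t\<in>{1..int T}. r \<bar>s - t\<bar>) = r 0 + (\<Sum>t\<in>{1..<s} \<union> {s<..int T}. r \<bar>s - t\<bar>)"
      by simp
    also have "\<dots> = r 0 + (\<Sum>t\<in>{1..<s}. r \<bar>s - t\<bar>) + (\<Sum>t\<in>{s<..int T}. r \<bar>s - t\<bar>)"
      by (subst sum.union_disjoint) auto
    finally show ?thesis
      using lower upper by simp
  qed
  have "(\<Sum>s\<in>{1..int T}. \<Sum>t\<in>{1..int T}. r \<bar>s - t\<bar>)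
      \<le> (\<Sum>s\<in>{1..int T}. r 0 + 2 * (\<Sum>h\<in>{1..int T}. r h))"
    by (rule sum_mono) (rule row)
  then show ?thesis by simp
qed

lemma ereal_INF_gt_imp_gap:
  fixes f :: "'a \<Rightarrow> real"
  assumes "ereal c < (INF x\<in>S. ereal (f x))"
  obtains \<delta> where "\<delta> > 0" and "\<And>x. x \<in> S \<Longrightarrow> c + \<delta> \<le> f x"
proof -
  obtain r where r: "ereal c < r" "r < (INF x\<in>S. ereal (f x))"
    using dense[OF assms] by blast
  then obtain r' where r': "r = ereal r'"
    by (cases r) auto
  show thesis
  proof (rule that[of "r' - c"])
    show "r' - c > 0" using r r' by simp
    fix x assume "x \<in> S"
    then have "r < ereal (f x)"
      using r(2) INF_lower[of x S "\<lambda>x. ereal (f x)"] by simp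
    then show "c + (r' - c) \<le> f x" using r' by simp
  qed
qed

lemma abs_integral_le_const:
  fixes f :: "'a \<Rightarrow> real"
  assumes "prob_space N" and "\<And>x. \<bar>f x\<bar> \<le> B"
  shows "\<bar>\<integral>x. f x \<partial>N\<bar> \<le> B"
proof (cases "integrable N f")
  case True
  interpret prob_space N by fact
  have "\<bar>\<integral>x. f x \<partial>N\<bar> \<le> (\<integral>x. \<bar>f x\<bar> \<partial>N)"
    by (rule integral_abs_bound)
  also have "\<dots> \<le> B"
    using True assms(2) by (intro integral_le_const) auto
  finally show ?thesis .
next
  case False
  then show ?thesis
    using order_trans[OF abs_ge_zero assms(2)] by (simp add: not_integrable_integral_eq)
qed

lemma (in finite_measure) measure_tendsto_0_subset:
  assumes "\<And>n. n \<ge> N \<Longrightarrow> A n \<subseteq> B n" and "\<And>n. n \<ge> N \<Longrightarrow> B n \<in> sets M"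
    and "(\<lambda>n. measure M (B n)) \<longlonglongrightarrow> 0"
  shows "(\<lambda>n. measure M (A n)) \<longlonglongrightarrow> 0"
proof -
  have "\<forall>\<^sub>F n in sequentially. measure M (A n) \<le> measure M (B n)"
    using eventually_ge_at_top[of N] by eventually_elim (use assms in \<open>auto intro: finite_measure_mono\<close>)
  then show ?thesis
    by (rule tendsto_sandwich[OF _ _ tendsto_const assms(3), rotated]) simp
qed

lemma integral_uniform_measure_count_space:
  fixes f :: "'a \<Rightarrow> real"
  assumes A: "finite A" "A \<noteq> {}"
  shows "(\<integral>x. f x \<partial>uniform_measure (count_space UNIV) A) = (\<Sum>a\<in>A. f a) / real (card A)"
proof -
  have cA: "card A > 0" using A by (simp add: card_gt_0_iff)
  have eq: "uniform_measure (count_space UNIV) A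
      = density (count_space UNIV) (\<lambda>x. ennreal (indicator A x / real (card A)))"
    unfolding uniform_measure_def
  proof (intro density_cong)
    show "AE x in count_space UNIV. indicator A x / emeasure (count_space UNIV) A
        = ennreal (indicator A x / real (card A))"
    proof (rule AE_I2)
      fix x
      have "1 / ennreal (real (card A)) = ennreal (1 / real (card A))"
        using divide_ennreal[of 1 "real (card A)"] cA by simp
      then show "indicator A x / emeasure (count_space UNIV) A = ennreal (indicator A x / real (card A))"
        using A by (auto simp: emeasure_count_space_finite indicator_def ennreal_of_nat_eq_real_of_nat)
    qed
  qed auto
  have "(\<integral>x. f x \<partial>uniform_measure (count_space UNIV) A)
      = (\<integral>x. (indicator A x / real (card A)) *\<^sub>R f x \<partial>count_space UNIV)"
    unfolding eq by (rule integral_density) auto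
  also have "\<dots> = (\<Sum>a | a \<in> UNIV \<and> (indicator A a / real (card A)) *\<^sub>R f a \<noteq> 0.
      (indicator A a / real (card A)) *\<^sub>R f a)"
    by (rule lebesgue_integral_count_space_finite_support)
      (rule finite_subset[OF _ A(1)], auto simp: indicator_def)
  also have "\<dots> = (\<Sum>a\<in>A. (indicator A a / real (card A)) *\<^sub>R f a)"
    by (rule sum.mono_neutral_cong_left) (use A in \<open>auto simp: indicator_def\<close>)
  also have "\<dots> = (\<Sum>a\<in>A. f a) / real (card A)"
    by (simp add: sum_divide_distrib)
  finally show ?thesis .
qed

lemma distr_PiM_pair:
  assumes M: "\<And>i. i \<in> I \<Longrightarrow> prob_space (M i)" and ij: "i \<in> I" "j \<in> I" "i \<noteq> j"
  shows "distr (PiM I M) (M i \<Otimes>\<^sub>M M j) (\<lambda>\<omega>. (\<omega> i, \<omega> j)) = M i \<Otimes>\<^sub>M M j"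
proof (rule pair_measure_eqI[symmetric])
  show "sigma_finite_measure (M i)" "sigma_finite_measure (M j)"
    using M ij by (simp_all add: prob_space_imp_sigma_finite)
  fix A B assume A: "A \<in> sets (M i)" and B: "B \<in> sets (M j)"
  have "(\<lambda>\<omega>. (\<omega> i, \<omega> j)) -` (A \<times> B) \<inter> space (PiM I M)
      = prod_emb I M {i, j} (\<Pi>\<^sub>E l\<in>{i, j}. if l = i then A else B)"
    using ij by (auto simp: prod_emb_def space_PiM PiE_iff)
  moreover have "(\<lambda>\<omega>. (\<omega> i, \<omega> j)) \<in> measurable (PiM I M) (M i \<Otimes>\<^sub>M M j)"
    using ij by measurable
  moreover have "emeasure (PiM I M) (prod_emb I M {i, j} (\<Pi>\<^sub>E l\<in>{i, j}. if l = i then A else B))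
      = (\<Prod>l\<in>{i, j}. emeasure (M l) (if l = i then A else B))"
    by (rule emeasure_PiM_emb) (use M ij A B in auto)
  ultimately show "emeasure (M i) A * emeasure (M j) B
      = emeasure (distr (PiM I M) (M i \<Otimes>\<^sub>M M j) (\<lambda>\<omega>. (\<omega> i, \<omega> j))) (A \<times> B)"
    using ij A B by (simp add: emeasure_distr)
qed simp

lemma strictly_stationary_integral_shift:
  fixes y :: "int \<Rightarrow> 'a \<Rightarrow> 'q::topological_space" and f :: "'q \<times> 'q \<Rightarrow> real"
  assumes rv: "\<And>t. y t \<in> borel_measurable M" and stat: "strictly_stationary M y"
    and f: "f \<in> borel_measurable (borel \<Otimes>\<^sub>M borel)"
  shows "(\<integral>\<omega>. f (y (a + h) \<omega>, y (b + h) \<omega>) \<partial>M) = (\<integral>\<omega>. f (y a \<omega>, y b \<omega>) \<partial>M)"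
proof -
  let ?N = "PiM {a, b} (\<lambda>_. borel) :: (int \<Rightarrow> 'q) measure"
  let ?Y = "\<lambda>h \<omega>. \<lambda>t\<in>{a, b}. y (t + h) \<omega>"
  have F: "(\<lambda>x. f (x a, x b)) \<in> borel_measurable ?N"
    using f by measurable
  have Y: "?Y h \<in> measurable M ?N" for h
    by (rule measurable_restrict) (rule rv)
  have integral_Y: "(\<integral>x. f (x a, x b) \<partial>distr M ?N (?Y h))
      = (\<integral>\<omega>. f (y (a + h) \<omega>, y (b + h) \<omega>) \<partial>M)" for h
    by (simp add: integral_distr[OF Y F])
  have "distr M ?N (?Y h) = distr M ?N (?Y 0)"
    using stat unfolding strictly_stationary_def by simp
  then show ?thesis
    using integral_Y[of h] integral_Y[of 0] by simp
qed

definition borel_prob :: "'a::topological_space measure \<Rightarrow> bool" where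
  "borel_prob P \<longleftrightarrow> prob_space P \<and> sets P = sets borel"

lemma borel_prob_distr:
  assumes "prob_space M" and "X \<in> borel_measurable M"
  shows "borel_prob (distr M borel X)"
  using assms by (simp add: borel_prob_def prob_space.prob_space_distr)

section \<open>Positive definite kernels and the maximum mean discrepancy\<close>

lemma pos_def_kernelD:
  fixes n :: nat
  assumes "pos_def_kernel k"
  shows "0 \<le> (\<Sum>i<n. \<Sum>j<n. c i * c j * k (x i) (x j))"
  using assms unfolding pos_def_kernel_def by blast

lemma pos_def_kernel_finite:
  assumes "pos_def_kernel k" and "finite I"
  shows "0 \<le> (\<Sum>i\<in>I. \<Sum>j\<in>I. c i * c j * k (x i) (x j))"
proof -
  obtain f where f: "bij_betw f {..<card I} I"
    using ex_bij_betw_nat_finite[OF assms(2)] by (auto simp: atLeast0LessThan)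
  have "0 \<le> (\<Sum>i<card I. \<Sum>j<card I. c (f i) * c (f j) * k (x (f i)) (x (f j)))"
    using pos_def_kernelD[OF assms(1), where n="card I" and c="c \<circ> f" and x="x \<circ> f"] by simp
  also have "\<dots> = (\<Sum>i<card I. \<Sum>j\<in>I. c (f i) * c j * k (x (f i)) (x j))"
    by (intro sum.cong refl) (rule sum.reindex_bij_betw[OF f])
  also have "\<dots> = (\<Sum>i\<in>I. \<Sum>j\<in>I. c i * c j * k (x i) (x j))"
    by (rule sum.reindex_bij_betw[OF f])
  finally show ?thesis .
qed

lemma pos_def_kernel_abs_le:
  assumes "pos_def_kernel k" and "symmetric_kernel k" and "\<And>x. k x x \<le> B"
  shows "\<bar>k x y\<bar> \<le> B"
proof -
  have sym: "k y x = k x y"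
    using assms(2) by (simp add: symmetric_kernel_def)
  have "0 \<le> k x x + 2 * s * k x y + s * s * k y y" for s :: real
    using pos_def_kernelD[OF assms(1), where n=2 and c="\<lambda>i. if i = 0 then 1 else s"
        and x="\<lambda>i. if i = 0 then x else y"]
    by (simp add: numeral_2_eq_2 sym algebra_simps)
  from this[of 1] this[of "-1"] assms(3)[of x] assms(3)[of y] show ?thesis
    by (auto simp: abs_le_iff)
qed

text \<open>By the reproducing property, \<open>kernel_inner k P Q\<close> is the RKHS inner product of the mean
  embeddings of \<open>P\<close> and \<open>Q\<close>, so that \<open>mmd2 k P Q\<close> is the squared distance between them.\<close>

definition kernel_inner :: "('q \<Rightarrow> 'q \<Rightarrow> real) \<Rightarrow> 'q measure \<Rightarrow> 'q measure \<Rightarrow> real" where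
  "kernel_inner k P Q = (\<integral>z. k (fst z) (snd z) \<partial>(P \<Otimes>\<^sub>M Q))"

lemma mmd2_kernel_inner: "mmd2 k P Q = kernel_inner k P P - 2 * kernel_inner k P Q + kernel_inner k Q Q"
  by (simp add: mmd2_def kernel_inner_def)

locale bounded_pd_kernel =
  fixes k :: "'q::topological_space \<Rightarrow> 'q \<Rightarrow> real"
  assumes measurable_kernel: "(\<lambda>z. k (fst z) (snd z)) \<in> borel_measurable (borel \<Otimes>\<^sub>M borel)"
    and symmetric: "symmetric_kernel k"
    and pos_def: "pos_def_kernel k"
    and abs_kernel_le_1: "\<bar>k x y\<bar> \<le> 1"
begin

lemma kernel_commute: "k x y = k y x"
  using symmetric by (simp add: symmetric_kernel_def)

lemma measurable_kernel_comp [measurable]: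
  assumes "f \<in> borel_measurable N" and "g \<in> borel_measurable N"
  shows "(\<lambda>x. k (f x) (g x)) \<in> borel_measurable N"
  using measurable_compose[OF measurable_Pair[OF assms] measurable_kernel] by simp

lemma measurable_kernel_pair:
  assumes "sets P = sets borel" and "sets Q = sets borel"
  shows "(\<lambda>z. k (fst z) (snd z)) \<in> borel_measurable (P \<Otimes>\<^sub>M Q)"
  by (subst measurable_cong_sets[OF sets_pair_measure_cong[OF assms] refl]) (rule measurable_kernel)

lemma integrable_kernel_comp:
  assumes "prob_space N" and "f \<in> borel_measurable N" and "g \<in> borel_measurable N"
  shows "integrable N (\<lambda>x. k (f x) (g x))"
proof -
  interpret prob_space N by fact
  show ?thesis
    using assms by (intro integrable_const_bound[where B=1]) (auto simp: abs_kernel_le_1)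
qed

lemma abs_mean_embedding_le_1: "prob_space Q \<Longrightarrow> \<bar>mean_embedding k Q x\<bar> \<le> 1"
  unfolding mean_embedding_def by (rule abs_integral_le_const) (auto simp: abs_kernel_le_1)

lemma abs_kernel_inner_le_1:
  assumes "prob_space P" and "prob_space Q"
  shows "\<bar>kernel_inner k P Q\<bar> \<le> 1"
  unfolding kernel_inner_def
  by (rule abs_integral_le_const) (auto simp: abs_kernel_le_1 assms prob_space_pair)

lemma abs_mmd2_le_4:
  assumes "prob_space P" and "prob_space Q"
  shows "\<bar>mmd2 k P Q\<bar> \<le> 4"
  using abs_kernel_inner_le_1[of P P] abs_kernel_inner_le_1[of P Q] abs_kernel_inner_le_1[of Q Q] assms
  by (simp add: mmd2_kernel_inner abs_le_iff)

lemma borel_measurable_mean_embedding: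
  assumes "borel_prob Q"
  shows "mean_embedding k Q \<in> borel_measurable borel"
proof -
  interpret Q: prob_space Q using assms by (simp add: borel_prob_def)
  have "(\<lambda>z. k (fst z) (snd z)) \<in> borel_measurable (borel \<Otimes>\<^sub>M Q)"
    using assms by (intro measurable_kernel_pair) (simp_all add: borel_prob_def)
  then show ?thesis
    unfolding mean_embedding_def by (intro Q.borel_measurable_lebesgue_integral) (simp add: case_prod_beta')
qed

lemma kernel_inner_iterated:
  assumes "borel_prob P" and "borel_prob Q"
  shows "kernel_inner k P Q = (\<integral>x. mean_embedding k Q x \<partial>P)"
proof -
  interpret PQ: pair_prob_space P Q
    using assms by (simp add: borel_prob_def pair_prob_space_def pair_sigma_finite_def prob_space_imp_sigma_finite)
  have "integrable (P \<Otimes>\<^sub>M Q) (\<lambda>z. k (fst z) (snd z))"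
    using assms by (intro integrable_kernel_comp) (auto simp: borel_prob_def prob_space_pair intro: measurable_kernel_pair)
  then show ?thesis
    unfolding kernel_inner_def mean_embedding_def using PQ.integral_fst'[of "\<lambda>z. k (fst z) (snd z)"] by simp
qed

lemma kernel_inner_commute:
  assumes "borel_prob P" and "borel_prob Q"
  shows "kernel_inner k P Q = kernel_inner k Q P"
proof -
  interpret PQ: pair_sigma_finite P Q
    using assms by (simp add: borel_prob_def pair_sigma_finite_def prob_space_imp_sigma_finite)
  have "kernel_inner k Q P = (\<integral>(x, y). k y x \<partial>(Q \<Otimes>\<^sub>M P))"
    by (simp add: kernel_inner_def kernel_commute case_prod_beta')
  also have "\<dots> = kernel_inner k P Q"
    using PQ.integral_product_swap[of "\<lambda>z. k (fst z) (snd z)"] assms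
    by (simp add: kernel_inner_def measurable_kernel_pair borel_prob_def case_prod_beta')
  finally show ?thesis by simp
qed

lemma integral_PiM_kernel:
  assumes M: "\<And>i. i \<in> I \<Longrightarrow> borel_prob (M i)" and "i \<in> I" "j \<in> I"
  shows "(\<integral>\<omega>. k (\<omega> i) (\<omega> j) \<partial>PiM I M)
    = (if i = j then (\<integral>x. k x x \<partial>M i) else kernel_inner k (M i) (M j))"
proof -
  have prob: "\<And>i. i \<in> I \<Longrightarrow> prob_space (M i)" and sets: "\<And>i. i \<in> I \<Longrightarrow> sets (M i) = sets borel"
    using M by (simp_all add: borel_prob_def)
  show ?thesis
  proof (cases "i = j")
    case True
    have "(\<lambda>x. k x x) \<in> borel_measurable (M i)"
      using sets[OF \<open>i \<in> I\<close>] by measurable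
    then have "(\<integral>\<omega>. k (\<omega> i) (\<omega> i) \<partial>PiM I M)
        = (\<integral>x. k x x \<partial>distr (PiM I M) (M i) (\<lambda>\<omega>. \<omega> i))"
      using \<open>i \<in> I\<close> by (simp add: integral_distr)
    then show ?thesis
      using True \<open>i \<in> I\<close> prob by (simp add: distr_PiM_component)
  next
    case False
    have "(\<lambda>z. k (fst z) (snd z)) \<in> borel_measurable (M i \<Otimes>\<^sub>M M j)"
      using assms by (intro measurable_kernel_pair sets)
    then have "(\<integral>\<omega>. k (\<omega> i) (\<omega> j) \<partial>PiM I M)
        = (\<integral>z. k (fst z) (snd z) \<partial>distr (PiM I M) (M i \<Otimes>\<^sub>M M j) (\<lambda>\<omega>. (\<omega> i, \<omega> j)))"
      using assms by (simp add: integral_distr)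
    then show ?thesis
      using False assms prob by (simp add: distr_PiM_pair kernel_inner_def)
  qed
qed

lemma kernel_inner_psd_PiM:
  assumes "finite I" and M: "\<And>i. i \<in> I \<Longrightarrow> borel_prob (M i)"
  shows "0 \<le> (\<Sum>i\<in>I. \<Sum>j\<in>I. c i * c j *
    (if i = j then (\<integral>x. k x x \<partial>M i) else kernel_inner k (M i) (M j)))"
proof -
  have PiM: "prob_space (PiM I M)"
    using M by (intro prob_space_PiM) (simp add: borel_prob_def)
  interpret prob_space "PiM I M" by (fact PiM)
  have component: "(\<lambda>\<omega>. \<omega> i) \<in> borel_measurable (PiM I M)" if "i \<in> I" for i
  proof -
    have sets: "sets (M i) = sets borel" using M[OF that] by (simp add: borel_prob_def)
    from measurable_component_singleton[OF that, of M]
    show ?thesis unfolding measurable_cong_sets[OF refl sets] .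
  qed
  have integrable: "integrable (PiM I M) (\<lambda>\<omega>. c i * c j * k (\<omega> i) (\<omega> j))" if "i \<in> I" "j \<in> I" for i j
    using that by (intro integrable_mult_right integrable_kernel_comp component PiM)
  have "0 \<le> (\<integral>\<omega>. (\<Sum>i\<in>I. \<Sum>j\<in>I. c i * c j * k (\<omega> i) (\<omega> j)) \<partial>PiM I M)"
    by (rule Bochner_Integration.integral_nonneg) (rule pos_def_kernel_finite[OF pos_def \<open>finite I\<close>])
  also have "\<dots> = (\<Sum>i\<in>I. \<Sum>j\<in>I. (\<integral>\<omega>. c i * c j * k (\<omega> i) (\<omega> j) \<partial>PiM I M))"
    using integrable
    by (auto simp: Bochner_Integration.integral_sum intro!: sum.cong Bochner_Integration.integrable_sum)
  also have "\<dots> = (\<Sum>i\<in>I. \<Sum>j\<in>I. c i * c j *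
      (if i = j then (\<integral>x. k x x \<partial>M i) else kernel_inner k (M i) (M j)))"
    using M by (intro sum.cong refl) (simp add: integral_PiM_kernel)
  finally show ?thesis .
qed

lemma kernel_inner_psd:
  assumes "finite A" and "\<And>a. a \<in> A \<Longrightarrow> borel_prob (P a)"
  shows "0 \<le> (\<Sum>a\<in>A. \<Sum>b\<in>A. c a * c b * kernel_inner k (P a) (P b))"
proof -
  define G where "G a b = kernel_inner k (P a) (P b)" for a b
  define D where "D a = (\<integral>x. k x x \<partial>P a)" for a
  define Q where "Q = (\<Sum>a\<in>A. \<Sum>b\<in>A. c a * c b * G a b)"
  define E where "E = (\<Sum>a\<in>A. c a * c a * (D a - G a a))"
  have "0 \<le> real n * real n * Q + real n * E" for n
  proof -
    let ?I = "A \<times> {..<n}"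
    \<comment> \<open>\<open>n\<close> independent copies of each \<open>P a\<close>, indexed by \<open>(a, l)\<close>\<close>
    have "0 \<le> (\<Sum>p\<in>?I. \<Sum>q\<in>?I. c (fst p) * c (fst q) *
        (if p = q then D (fst p) else G (fst p) (fst q)))"
      unfolding D_def G_def using assms
      by (intro kernel_inner_psd_PiM[where M = "\<lambda>p. P (fst p)"]) auto
    also have "\<dots> = (\<Sum>p\<in>?I. \<Sum>q\<in>?I. c (fst p) * c (fst q) * G (fst p) (fst q)
        + (if p = q then c (fst p) * c (fst p) * (D (fst p) - G (fst p) (fst p)) else 0))"
      by (intro sum.cong refl) (auto simp: algebra_simps)
    also have "\<dots> = (\<Sum>p\<in>?I. \<Sum>q\<in>?I. c (fst p) * c (fst q) * G (fst p) (fst q))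
        + (\<Sum>p\<in>?I. c (fst p) * c (fst p) * (D (fst p) - G (fst p) (fst p)))"
      using \<open>finite A\<close> by (simp add: sum.distrib)
    also have "\<dots> = real n * real n * Q + real n * E"
      by (simp add: sum.cartesian_product' Q_def E_def sum_distrib_left mult.assoc)
    finally show ?thesis .
  qed
  then have "0 \<le> Q"
    by (rule quadratic_nonneg_imp_leading_nonneg)
  then show ?thesis
    by (simp add: Q_def G_def)
qed

lemma kernel_inner_psd3:
  assumes "borel_prob P1" and "borel_prob P2" and "borel_prob P3"
  shows "0 \<le> a * a * kernel_inner k P1 P1 + b * b * kernel_inner k P2 P2 + c * c * kernel_inner k P3 P3
    + 2 * a * b * kernel_inner k P1 P2 + 2 * a * c * kernel_inner k P1 P3 + 2 * b * c * kernel_inner k P2 P3"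
proof -
  define P where "P i = (if i = 0 then P1 else if i = 1 then P2 else P3)" for i :: nat
  define w where "w i = (if i = 0 then a else if i = 1 then b else c)" for i :: nat
  have "0 \<le> (\<Sum>i\<in>{0, 1, 2}. \<Sum>j\<in>{0, 1, 2}. w i * w j * kernel_inner k (P i) (P j))"
    using assms by (intro kernel_inner_psd) (auto simp: P_def)
  then show ?thesis
    using kernel_inner_commute[of P1 P2] kernel_inner_commute[of P1 P3] kernel_inner_commute[of P2 P3] assms
    by (simp add: P_def w_def algebra_simps)
qed

lemma mmd2_nonneg:
  assumes "borel_prob P" and "borel_prob Q"
  shows "0 \<le> mmd2 k P Q"
  using kernel_inner_psd3[OF assms assms(2), of 1 "-1" 0] by (simp add: mmd2_kernel_inner)

lemma mmd_commute:
  assumes "borel_prob P" and "borel_prob Q"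
  shows "mmd k P Q = mmd k Q P"
  by (simp add: mmd_def mmd2_kernel_inner kernel_inner_commute[OF assms])

lemma mmd_triangle:
  assumes "borel_prob P1" and "borel_prob P2" and "borel_prob P3"
  shows "mmd k P1 P3 \<le> mmd k P1 P2 + mmd k P2 P3"
proof -
  define x where "x = mmd2 k P1 P2"
  define z where "z = mmd2 k P2 P3"
  define w where "w = kernel_inner k P1 P2 - kernel_inner k P1 P3 - kernel_inner k P2 P2 + kernel_inner k P2 P3"
  have "0 \<le> x" "0 \<le> z"
    unfolding x_def z_def using assms by (simp_all add: mmd2_nonneg)
  \<comment> \<open>the squared norm of \<open>t (\<mu>1 - \<mu>2) + (\<mu>2 - \<mu>3)\<close> in terms of the mean embeddings \<open>\<mu>i\<close>\<close>
  have "0 \<le> t * t * x + 2 * t * w + z" for t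
    using kernel_inner_psd3[OF assms, of t "1 - t" "-1"]
    by (simp add: x_def z_def w_def mmd2_kernel_inner algebra_simps)
  then have "w \<le> sqrt x * sqrt z"
    using \<open>0 \<le> x\<close> \<open>0 \<le> z\<close> by (rule quadratic_nonneg_imp_le_sqrt_mult)
  moreover have "mmd2 k P1 P3 = x + 2 * w + z"
    by (simp add: x_def z_def w_def mmd2_kernel_inner)
  ultimately have "mmd2 k P1 P3 \<le> (sqrt x + sqrt z)\<^sup>2"
    using \<open>0 \<le> x\<close> \<open>0 \<le> z\<close> by (simp add: power2_sum)
  then show ?thesis
    using \<open>0 \<le> x\<close> \<open>0 \<le> z\<close> unfolding mmd_def x_def z_def by (intro real_le_lsqrt) simp_all
qed

lemma mmd_le_if_closer:
  assumes "borel_prob Q1" and "borel_prob Q2" and "borel_prob E" and "borel_prob P0"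
    and "mmd k Q1 E \<le> mmd k Q2 E"
  shows "mmd k Q1 P0 \<le> mmd k Q2 P0 + 2 * mmd k E P0"
proof -
  have "mmd k Q1 P0 \<le> mmd k Q1 E + mmd k E P0"
    using assms by (intro mmd_triangle)
  also have "\<dots> \<le> mmd k Q2 E + mmd k E P0"
    using assms(5) by simp
  also have "mmd k Q2 E \<le> mmd k Q2 P0 + mmd k P0 E"
    using assms by (intro mmd_triangle)
  also have "mmd k P0 E = mmd k E P0"
    using assms by (intro mmd_commute)
  finally show ?thesis by simp
qed

end

section \<open>Empirical measures of stationary sequences\<close>

lemma
  fixes y :: "int \<Rightarrow> 'a \<Rightarrow> 'q::topological_space"
  assumes "T \<ge> 1"
  shows borel_prob_empirical_measure: "borel_prob (empirical_measure y T \<omega>)"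
    and integral_empirical_measure: "f \<in> borel_measurable borel \<Longrightarrow>
      (\<integral>x. f x \<partial>empirical_measure y T \<omega>) = (\<Sum>t\<in>{1..int T}. f (y t \<omega>)) / real T"
proof -
  let ?U = "uniform_measure (count_space UNIV) {1..int T}"
  have ne: "{1..int T} \<noteq> {}" using assms by simp
  have Y: "(\<lambda>t. y t \<omega>) \<in> measurable ?U borel"
    by (subst measurable_cong_sets[of _ "count_space UNIV" borel borel]) auto
  have "prob_space ?U"
    by (rule prob_space_uniform_measure) (use ne in \<open>auto simp: emeasure_count_space_finite\<close>)
  then show "borel_prob (empirical_measure y T \<omega>)"
    unfolding empirical_measure_def borel_prob_def by (simp add: prob_space.prob_space_distr[OF _ Y])
  assume "f \<in> borel_measurable borel"
  then have "(\<integral>x. f x \<partial>empirical_measure y T \<omega>) = (\<integral>t. f (y t \<omega>) \<partial>?U)"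
    unfolding empirical_measure_def by (rule integral_distr[OF Y])
  also have "\<dots> = (\<Sum>t\<in>{1..int T}. f (y t \<omega>)) / real T"
    using ne by (simp add: integral_uniform_measure_count_space)
  finally show "(\<integral>x. f x \<partial>empirical_measure y T \<omega>) = (\<Sum>t\<in>{1..int T}. f (y t \<omega>)) / real T" .
qed

lemma Sigma_T_eq_sum_int: "Sigma_T M k y T = (\<Sum>h\<in>{1..int T}. rho M k y h)"
proof -
  have "Sigma_T M k y T = (\<Sum>h\<in>int ` {1..T}. rho M k y h)"
    by (simp add: Sigma_T_def sum.reindex)
  then show ?thesis by (simp add: image_int_atLeastAtMost)
qed

context bounded_pd_kernel
begin

lemma mmd2_empirical_measure:
  assumes "T \<ge> 1" and "borel_prob P0"
  shows "mmd2 k (empirical_measure y T \<omega>) P0 =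
      (\<Sum>s\<in>{1..int T}. \<Sum>t\<in>{1..int T}. k (y s \<omega>) (y t \<omega>)) / (real T)\<^sup>2
    - 2 * (\<Sum>t\<in>{1..int T}. mean_embedding k P0 (y t \<omega>)) / real T + kernel_inner k P0 P0"
proof -
  let ?E = "empirical_measure y T \<omega>"
  have E: "borel_prob ?E"
    using assms(1) by (rule borel_prob_empirical_measure)
  have [measurable]: "mean_embedding k P0 \<in> borel_measurable borel"
    using assms(2) by (rule borel_measurable_mean_embedding)
  have "(\<lambda>z. k x z) \<in> borel_measurable borel" for x
    by measurable
  then have "kernel_inner k ?E ?E = (\<integral>x. (\<Sum>t\<in>{1..int T}. k x (y t \<omega>)) / real T \<partial>?E)"
    using assms(1) by (simp add: kernel_inner_iterated[OF E E] mean_embedding_def integral_empirical_measure)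
  also have "\<dots> = (\<Sum>s\<in>{1..int T}. \<Sum>t\<in>{1..int T}. k (y s \<omega>) (y t \<omega>)) / (real T)\<^sup>2"
    using assms(1) by (simp add: integral_empirical_measure power2_eq_square sum_divide_distrib)
  finally show ?thesis
    using assms by (simp add: mmd2_kernel_inner kernel_inner_iterated[OF E] integral_empirical_measure)
qed

lemma borel_measurable_mmd2_empirical_measure:
  assumes "\<And>t. y t \<in> borel_measurable M" and "borel_prob P0" and "T \<ge> 1"
  shows "(\<lambda>\<omega>. mmd2 k (empirical_measure y T \<omega>) P0) \<in> borel_measurable M"
proof -
  have [measurable]: "mean_embedding k P0 \<in> borel_measurable borel" "\<And>t. y t \<in> borel_measurable M"
    using assms(1,2) by (simp_all add: borel_measurable_mean_embedding)
  show ?thesis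
    unfolding mmd2_empirical_measure[OF assms(3,2)] by measurable
qed

lemma borel_measurable_mmd_empirical_measure:
  assumes "\<And>t. y t \<in> borel_measurable M" and "borel_prob P0" and "T \<ge> 1"
  shows "(\<lambda>\<omega>. mmd k (empirical_measure y T \<omega>) P0) \<in> borel_measurable M"
  using borel_measurable_mmd2_empirical_measure[OF assms] unfolding mmd_def by measurable

lemma integral_mmd2_empirical_measure:
  assumes "prob_space M" and rv: "\<And>t. y t \<in> borel_measurable M"
    and marg: "\<And>t. distr M borel (y t) = P0" and "T \<ge> 1"
  shows "(\<integral>\<omega>. mmd2 k (empirical_measure y T \<omega>) P0 \<partial>M) =
    (\<Sum>s\<in>{1..int T}. \<Sum>t\<in>{1..int T}. (\<integral>\<omega>. k (y s \<omega>) (y t \<omega>) \<partial>M) - kernel_inner k P0 P0) / (real T)\<^sup>2"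
proof -
  interpret prob_space M by fact
  have P0: "borel_prob P0"
    using borel_prob_distr[OF assms(1) rv[of 0]] marg[of 0] by simp
  have [measurable]: "mean_embedding k P0 \<in> borel_measurable borel" "\<And>t. y t \<in> borel_measurable M"
    using P0 rv by (simp_all add: borel_measurable_mean_embedding)
  have integrable_k: "integrable M (\<lambda>\<omega>. k (y s \<omega>) (y t \<omega>))" for s t
    by (intro integrable_kernel_comp rv) fact
  have integrable_\<mu>: "integrable M (\<lambda>\<omega>. mean_embedding k P0 (y t \<omega>))" for t
    using P0 by (intro integrable_const_bound[where B=1]) (auto simp: borel_prob_def abs_mean_embedding_le_1)
  have expectation_\<mu>: "(\<integral>\<omega>. mean_embedding k P0 (y t \<omega>) \<partial>M) = kernel_inner k P0 P0" for t
  proof -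
    have "(\<integral>\<omega>. mean_embedding k P0 (y t \<omega>) \<partial>M)
        = (\<integral>x. mean_embedding k P0 x \<partial>distr M borel (y t))"
      by (simp add: integral_distr)
    then show ?thesis
      using marg kernel_inner_iterated[OF P0 P0] by simp
  qed
  have "(\<integral>\<omega>. mmd2 k (empirical_measure y T \<omega>) P0 \<partial>M) =
      (\<Sum>s\<in>{1..int T}. \<Sum>t\<in>{1..int T}. (\<integral>\<omega>. k (y s \<omega>) (y t \<omega>) \<partial>M)) / (real T)\<^sup>2
      - 2 * (\<Sum>t\<in>{1..int T}. kernel_inner k P0 P0) / real T + kernel_inner k P0 P0"
    unfolding mmd2_empirical_measure[OF assms(4) P0] using integrable_k integrable_\<mu>
    by (simp add: Bochner_Integration.integral_sum Bochner_Integration.integrable_sum expectation_\<mu> prob_space)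
  also have "\<dots> = (\<Sum>s\<in>{1..int T}. \<Sum>t\<in>{1..int T}.
      (\<integral>\<omega>. k (y s \<omega>) (y t \<omega>) \<partial>M) - kernel_inner k P0 P0) / (real T)\<^sup>2"
    using assms(4) by (simp add: sum_subtractf power2_eq_square field_simps)
  finally show ?thesis .
qed

lemma rho_abs_diff:
  assumes rv: "\<And>t. y t \<in> borel_measurable M" and stat: "strictly_stationary M y"
    and marg: "distr M borel (y 0) = P0"
  shows "rho M k y \<bar>s - t\<bar> = \<bar>(\<integral>\<omega>. k (y s \<omega>) (y t \<omega>) \<partial>M) - kernel_inner k P0 P0\<bar>"
proof -
  have shift: "(\<integral>\<omega>. k (y (a + h) \<omega>) (y (b + h) \<omega>) \<partial>M)
      = (\<integral>\<omega>. k (y a \<omega>) (y b \<omega>) \<partial>M)" for a b h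
    using strictly_stationary_integral_shift[OF rv stat measurable_kernel] by simp
  have "(\<integral>\<omega>. k (y s \<omega>) (y t \<omega>) \<partial>M) = (\<integral>\<omega>. k (y \<bar>s - t\<bar> \<omega>) (y 0 \<omega>) \<partial>M)"
  proof (cases "t \<le> s")
    case True
    then show ?thesis using shift[of "s - t" t 0] by simp
  next
    case False
    then show ?thesis using shift[of "t - s" s 0] by (simp add: kernel_commute)
  qed
  then show ?thesis
    by (simp add: rho_def kernel_inner_def marg)
qed

lemma integral_mmd2_empirical_measure_le:
  assumes "prob_space M" and rv: "\<And>t. y t \<in> borel_measurable M" and stat: "strictly_stationary M y"
    and marg: "\<And>t. distr M borel (y t) = P0" and "T \<ge> 1"
  shows "(\<integral>\<omega>. mmd2 k (empirical_measure y T \<omega>) P0 \<partial>M) \<le> (2 + 2 * Sigma_T M k y T) / real T"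
proof -
  let ?A = "kernel_inner k P0 P0"
  let ?Ek = "\<lambda>s t. \<integral>\<omega>. k (y s \<omega>) (y t \<omega>) \<partial>M"
  have P0: "borel_prob P0"
    using borel_prob_distr[OF assms(1) rv[of 0]] marg[of 0] by simp
  have "\<bar>?Ek 0 0\<bar> \<le> 1"
    using assms(1) by (intro abs_integral_le_const) (auto simp: abs_kernel_le_1)
  moreover have "\<bar>?A\<bar> \<le> 1"
    using P0 by (intro abs_kernel_inner_le_1) (simp_all add: borel_prob_def)
  ultimately have rho_0: "rho M k y 0 \<le> 2"
    using rho_abs_diff[OF rv stat marg, of 0 0] by simp
  have "(\<Sum>s\<in>{1..int T}. \<Sum>t\<in>{1..int T}. ?Ek s t - ?A)
      \<le> (\<Sum>s\<in>{1..int T}. \<Sum>t\<in>{1..int T}. rho M k y \<bar>s - t\<bar>)"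
    using rho_abs_diff[OF rv stat marg] by (intro sum_mono) simp
  also have "\<dots> \<le> real T * (rho M k y 0 + 2 * (\<Sum>h\<in>{1..int T}. rho M k y h))"
    by (rule sum_sum_abs_diff_le) (simp add: rho_def)
  also have "\<dots> \<le> real T * (2 + 2 * Sigma_T M k y T)"
    using rho_0 by (intro mult_left_mono) (simp_all add: Sigma_T_eq_sum_int)
  finally have "(\<Sum>s\<in>{1..int T}. \<Sum>t\<in>{1..int T}. ?Ek s t - ?A) / (real T)\<^sup>2
      \<le> (2 + 2 * Sigma_T M k y T) / real T"
    using assms(5) by (simp add: power2_eq_square field_simps)
  then show ?thesis
    using integral_mmd2_empirical_measure[OF assms(1) rv marg assms(5)] by simp
qed

lemma measure_mmd_empirical_ge_tendsto_0:
  assumes "prob_space M" and rv: "\<And>t. y t \<in> borel_measurable M" and stat: "strictly_stationary M y"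
    and marg: "\<And>t. distr M borel (y t) = P0"
    and Sigma_o: "(\<lambda>T. Sigma_T M k y T) \<in> o(\<lambda>T. real T)" and "\<eta> > 0"
  shows "(\<lambda>T. measure M {\<omega>\<in>space M. \<eta> \<le> mmd k (empirical_measure y T \<omega>) P0}) \<longlonglongrightarrow> 0"
proof -
  interpret prob_space M by fact
  have P0: "borel_prob P0"
    using borel_prob_distr[OF assms(1) rv[of 0]] marg[of 0] by simp
  have bound: "measure M {\<omega>\<in>space M. \<eta> \<le> mmd k (empirical_measure y T \<omega>) P0}
      \<le> (2 + 2 * Sigma_T M k y T) / real T / \<eta>\<^sup>2" if "T \<ge> 1" for T
  proof -
    let ?D2 = "\<lambda>\<omega>. mmd2 k (empirical_measure y T \<omega>) P0"
    have D2_nonneg: "0 \<le> ?D2 \<omega>" for \<omega>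
      using borel_prob_empirical_measure[OF that] P0 by (rule mmd2_nonneg)
    have "measure M {\<omega>\<in>space M. \<eta> \<le> mmd k (empirical_measure y T \<omega>) P0}
        = measure M {\<omega>\<in>space M. \<bar>mmd k (empirical_measure y T \<omega>) P0\<bar> \<ge> \<eta>}"
      using D2_nonneg by (simp add: mmd_def)
    also have "\<dots> \<le> (\<integral>\<omega>. (mmd k (empirical_measure y T \<omega>) P0)\<^sup>2 \<partial>M) / \<eta>\<^sup>2"
    proof (rule second_moment_method)
      show "(\<lambda>\<omega>. mmd k (empirical_measure y T \<omega>) P0) \<in> borel_measurable M"
        using rv P0 that by (rule borel_measurable_mmd_empirical_measure)
      have "\<bar>?D2 \<omega>\<bar> \<le> 4" for \<omega>
        using borel_prob_empirical_measure[OF that, where y=y and \<omega>=\<omega>] P0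
        by (intro abs_mmd2_le_4) (simp_all add: borel_prob_def)
      then have "integrable M ?D2"
        using borel_measurable_mmd2_empirical_measure[OF rv P0 that]
        by (intro integrable_const_bound[where B=4]) auto
      then show "integrable M (\<lambda>\<omega>. (mmd k (empirical_measure y T \<omega>) P0)\<^sup>2)"
        using D2_nonneg by (simp add: mmd_def)
    qed fact
    also have "\<dots> = (\<integral>\<omega>. ?D2 \<omega> \<partial>M) / \<eta>\<^sup>2"
      using D2_nonneg by (simp add: mmd_def)
    also have "\<dots> \<le> (2 + 2 * Sigma_T M k y T) / real T / \<eta>\<^sup>2"
      using integral_mmd2_empirical_measure_le[OF assms(1) rv stat marg that] by (rule divide_right_mono) simp
    finally show ?thesis .
  qed
  have "(\<lambda>T. Sigma_T M k y T / real T) \<longlonglongrightarrow> 0"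
    using smalloD_tendsto[OF Sigma_o] by simp
  then have "(\<lambda>T. (2 / real T + 2 * (Sigma_T M k y T / real T)) / \<eta>\<^sup>2) \<longlonglongrightarrow> (0 + 2 * 0) / \<eta>\<^sup>2"
    using \<open>\<eta> > 0\<close> by (intro tendsto_intros lim_const_over_n) simp_all
  then have lim: "(\<lambda>T. (2 + 2 * Sigma_T M k y T) / real T / \<eta>\<^sup>2) \<longlonglongrightarrow> 0"
    by (simp add: add_divide_distrib)
  have "\<forall>\<^sub>F T in sequentially. measure M {\<omega>\<in>space M. \<eta> \<le> mmd k (empirical_measure y T \<omega>) P0}
      \<le> (2 + 2 * Sigma_T M k y T) / real T / \<eta>\<^sup>2"
    using eventually_ge_at_top[of 1] by eventually_elim (rule bound)
  then show ?thesis
    by (rule tendsto_sandwich[OF _ _ tendsto_const lim, rotated]) simp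
qed

end

theorem proposition3:
  fixes M :: "'a measure"
    and y :: "int \<Rightarrow> 'a \<Rightarrow> 'q::euclidean_space"
    and P0 :: "'q measure"
    and k :: "'q \<Rightarrow> 'q \<Rightarrow> real"
    and \<Theta> :: "'d::euclidean_space set"
    and P :: "'d \<Rightarrow> 'q measure"
    and \<theta>hat :: "nat \<Rightarrow> 'a \<Rightarrow> 'd"
    and \<theta>star :: "'d"
  assumes "prob_space M"
    and rv: "\<And>t. y t \<in> borel_measurable M"
    and stat: "strictly_stationary M y"
    and marg: "\<And>t. distr M borel (y t) = P0"
    and k_meas: "(\<lambda>z. k (fst z) (snd z)) \<in> borel_measurable (borel \<Otimes>\<^sub>M borel)"
    and k_sym: "symmetric_kernel k"
    and k_pd: "pos_def_kernel k"
    and k_char: "characteristic_kernel k"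
    and k_bdd: "\<And>x. \<bar>k x x\<bar> \<le> 1"
    and P_prob: "\<And>\<theta>. \<theta> \<in> \<Theta> \<Longrightarrow> prob_space (P \<theta>) \<and> sets (P \<theta>) = sets borel"
    and est_in: "\<And>T \<omega>. T \<ge> 1 \<Longrightarrow> \<omega> \<in> space M \<Longrightarrow> \<theta>hat T \<omega> \<in> \<Theta>"
    and est_min: "\<And>T \<omega> \<theta>. T \<ge> 1 \<Longrightarrow> \<omega> \<in> space M \<Longrightarrow> \<theta> \<in> \<Theta> \<Longrightarrow>
        mmd k (P (\<theta>hat T \<omega>)) (empirical_measure y T \<omega>) \<le> mmd k (P \<theta>) (empirical_measure y T \<omega>)"
    and est_meas: "\<And>T. T \<ge> 1 \<Longrightarrow> \<theta>hat T \<in> borel_measurable M"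
    and Sigma_o: "(\<lambda>T. Sigma_T M k y T) \<in> o(\<lambda>T. real T)"
    and ident1: "\<theta>star \<in> \<Theta> \<and> (\<forall>\<theta>\<in>\<Theta>. \<theta> \<noteq> \<theta>star \<longrightarrow> mmd k (P \<theta>star) P0 < mmd k (P \<theta>) P0)"
    and ident2: "\<And>r. r > 0 \<Longrightarrow>
        (INF \<theta>\<in>{\<theta>\<in>\<Theta>. norm (\<theta> - \<theta>star) \<ge> r}. ereal (mmd k (P \<theta>) P0)) > ereal (mmd k (P \<theta>star) P0)"
  shows "\<forall>\<epsilon>>0. (\<lambda>T. measure M {\<omega>\<in>space M. norm (\<theta>hat T \<omega> - \<theta>star) \<ge> \<epsilon>}) \<longlonglongrightarrow> 0"
proof (intro allI impI)
  fix \<epsilon> :: real assume "\<epsilon> > 0"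
  interpret prob_space M by fact
  interpret bounded_pd_kernel k
    using k_meas k_sym k_pd pos_def_kernel_abs_le[OF k_pd k_sym, where B=1] k_bdd
    by unfold_locales (auto simp: abs_le_iff)
  have P0: "borel_prob P0"
    using borel_prob_distr[OF \<open>prob_space M\<close> rv[of 0]] marg[of 0] by simp
  obtain \<delta> where "\<delta> > 0" and sep: "\<And>\<theta>. \<theta> \<in> {\<theta>\<in>\<Theta>. norm (\<theta> - \<theta>star) \<ge> \<epsilon>} \<Longrightarrow>
      mmd k (P \<theta>star) P0 + \<delta> \<le> mmd k (P \<theta>) P0"
    using ereal_INF_gt_imp_gap[OF ident2[OF \<open>\<epsilon> > 0\<close>]] by blast
  show "(\<lambda>T. measure M {\<omega>\<in>space M. norm (\<theta>hat T \<omega> - \<theta>star) \<ge> \<epsilon>}) \<longlonglongrightarrow> 0"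
  proof (rule measure_tendsto_0_subset)
    fix T :: nat assume "T \<ge> 1"
    show "{\<omega>\<in>space M. norm (\<theta>hat T \<omega> - \<theta>star) \<ge> \<epsilon>}
        \<subseteq> {\<omega>\<in>space M. \<delta> / 2 \<le> mmd k (empirical_measure y T \<omega>) P0}"
    proof safe
      fix \<omega> assume "\<omega> \<in> space M" and "norm (\<theta>hat T \<omega> - \<theta>star) \<ge> \<epsilon>"
      then have "mmd k (P \<theta>star) P0 + \<delta> \<le> mmd k (P (\<theta>hat T \<omega>)) P0"
        using sep est_in \<open>T \<ge> 1\<close> by blast
      also have "\<dots> \<le> mmd k (P \<theta>star) P0 + 2 * mmd k (empirical_measure y T \<omega>) P0"
        using P_prob est_in est_min ident1 P0 borel_prob_empirical_measure \<open>\<omega> \<in> space M\<close> \<open>T \<ge> 1\<close>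
        by (intro mmd_le_if_closer) (simp_all add: borel_prob_def)
      finally show "\<delta> / 2 \<le> mmd k (empirical_measure y T \<omega>) P0" by simp
    qed
    have [measurable]: "(\<lambda>\<omega>. mmd k (empirical_measure y T \<omega>) P0) \<in> borel_measurable M"
      using rv P0 \<open>T \<ge> 1\<close> by (rule borel_measurable_mmd_empirical_measure)
    show "{\<omega>\<in>space M. \<delta> / 2 \<le> mmd k (empirical_measure y T \<omega>) P0} \<in> sets M"
      by measurable
  next
    show "(\<lambda>T. measure M {\<omega>\<in>space M. \<delta> / 2 \<le> mmd k (empirical_measure y T \<omega>) P0}) \<longlonglongrightarrow> 0"
      using \<open>\<delta> > 0\<close> by (intro measure_mmd_empirical_ge_tendsto_0[OF \<open>prob_space M\<close> rv stat marg Sigma_o]) simp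
  qed
qed

end
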